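(* Let $f:\mathbb{R}\to\mathbb{R}\cup\{\pm\infty\}$ be a proper concave function such that $f(\delta)\le0$ and $\partial f(\delta)\cap\mathbb{R}_{<0}\ne\emptyset$ for some $\delta\in\operatorname{dom}(f)$, and such that $f$ has a root or attains its maximum; let $\delta^*:=\max(\{\delta:f(\delta)=0\}\cup\operatorname{argmax}f)$. Run the (standard) Newton–Dinkelbach method described in the context. Then for every iteration $i\ge2$: $\delta^*\le\delta^{(i)}<\delta^{(i-1)}$, $f(\delta^* )\ge f(\delta^{(i)})>f(\delta^{(i-1)})$, and $g^{(i)}\ge g^{(i-1)}$, where the last inequality holds with equality if and only if $g^{(i)}=\inf_{g\in\partial f(\delta^{(i)})}g$, $g^{(i-1)}=\sup_{g\in\partial f(\delta^{(i-1)})}g$ and $f(\delta^{(i)})=0$. Moreover, \[ \frac{f(\delta^{(i)})}{f(\delta^{(i-1)})}+\frac{g^{(i)}}{g^{(i-1)}}\le1. \]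
   Context: $\operatorname{dom}(f):=\{x:-\infty<f(x)<\infty\}$; $\partial f(x_0):=\{g: f(x)\le f(x_0)+g(x-x_0)\ \forall x\in\mathbb{R}\}$. Newton–Dinkelbach method: given oracles returning $f(\delta)$ and some $g\in\partial f(\delta)$, input $\delta^{(1)}\in\operatorname{dom}(f)$, $g^{(1)}\in\partial f(\delta^{(1)})$ with $f(\delta^{(1)})\le0$, $g^{(1)}<0$. At iteration $i\ge1$: if $f(\delta^{(i)})=0$ return $\delta^{(i)}$; otherwise let $\delta:=\delta^{(i)}-f(\delta^{(i)})/g^{(i)}$ and $g\in\partial f(\delta)$ from the oracle; if $f(\delta)=-\infty$, or $f(\delta)<0$ and $g\ge0$, stop and report no root; otherwise set $\delta^{(i+1)}:=\delta$, $g^{(i+1)}:=g$. "Iteration $i$" refers to an iteration at whose start $\delta^{(i)},g^{(i)}$ are defined. *)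

theory Defs
  imports "HOL-Analysis.Analysis"
begin

definition edom :: "(real \<Rightarrow> ereal) \<Rightarrow> real set" where
  "edom f = {x. -\<infinity> < f x \<and> f x < \<infinity>}"

text \<open>Superdifferential (subdifferential in the concave sense, as in the paper).\<close>
definition superdiff :: "(real \<Rightarrow> ereal) \<Rightarrow> real \<Rightarrow> real set" where
  "superdiff f x0 = {g. \<forall>x. f x \<le> f x0 + ereal (g * (x - x0))}"

definition concave_efun :: "(real \<Rightarrow> ereal) \<Rightarrow> bool" where
  "concave_efun f \<longleftrightarrow> convex {(x, r :: real). ereal r \<le> f x}"

definition proper_concave :: "(real \<Rightarrow> ereal) \<Rightarrow> bool" where
  "proper_concave f \<longleftrightarrow> concave_efun f \<and> (\<forall>x. f x < \<infinity>) \<and> (\<exists>x. -\<infinity> < f x)"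

definition eargmax :: "(real \<Rightarrow> ereal) \<Rightarrow> real set" where
  "eargmax f = {x. \<forall>y. f y \<le> f x}"

definition nd_delta_star :: "(real \<Rightarrow> ereal) \<Rightarrow> real" where
  "nd_delta_star f = (GREATEST d. d \<in> {d. f d = 0} \<union> eargmax f)"

text \<open>nd_reached f dl g i: the sequences dl, g are a run of the Newton--Dinkelbach method
  (with the oracle's subgradient choices g) and iteration i is reached, i.e. dl i, g i are
  defined: the input conditions hold and for every iteration k with 1 \<le> k < i the method
  did not stop and produced dl (k+1), g (k+1).\<close>
definition nd_reached :: "(real \<Rightarrow> ereal) \<Rightarrow> (nat \<Rightarrow> real) \<Rightarrow> (nat \<Rightarrow> real) \<Rightarrow> nat \<Rightarrow> bool" where
  "nd_reached f dl g i \<longleftrightarrow>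
     dl 1 \<in> edom f \<and> g 1 \<in> superdiff f (dl 1) \<and> f (dl 1) \<le> 0 \<and> g 1 < 0 \<and>
     (\<forall>k. 1 \<le> k \<and> k < i \<longrightarrow>
        f (dl k) \<noteq> 0 \<and>
        dl (Suc k) = dl k - real_of_ereal (f (dl k)) / g k \<and>
        g (Suc k) \<in> superdiff f (dl (Suc k)) \<and>
        \<not> (f (dl (Suc k)) = -\<infinity> \<or> (f (dl (Suc k)) < 0 \<and> g (Suc k) \<ge> 0)))"

end

theory Submission
  imports Defs
begin

text \<open>At the previous iterate \<open>a\<close>, \<open>f\<close> lies below the line through \<open>(a, f a)\<close> whose
  slope is the supergradient returned there, and the new iterate \<open>b\<close> is the zero of that
  line, so \<open>f b \<le> 0\<close>; comparing this with the supergradient inequality at \<open>b\<close> gives the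
  monotonicity of iterates, values and slopes and the bound on the ratios. To the right of
  \<open>b\<close>, \<open>f\<close> lies strictly below \<open>f b \<le> 0\<close> (by the tangent at \<open>b\<close>, or at \<open>a\<close> when \<open>f b = 0\<close>),
  so every root and maximiser lies left of \<open>b\<close>. Their supremum is again a root or
  maximiser: it lies strictly between a root or maximiser and the previous iterate, hence in
  the interior of the domain, where \<open>f\<close> is continuous.\<close>

lemma superdiffD: "g \<in> superdiff f a \<Longrightarrow> f x \<le> f a + ereal (g * (x - a))"
  unfolding superdiff_def by blast

lemma superdiff_newton_nonpos:
  assumes "g \<in> superdiff f a" "f a = ereal F" "g \<noteq> 0"
  shows "f (a - F / g) \<le> 0"
proof -
  have "f (a - F / g) \<le> f a + ereal (g * ((a - F / g) - a))"
    using assms(1) by (rule superdiffD)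
  also have "\<dots> = 0"
    using assms(2,3) by simp
  finally show ?thesis .
qed

lemma concave_efunD:
  assumes "concave_efun f" "ereal u \<le> f x" "ereal v \<le> f y" "0 \<le> t" "t \<le> 1"
  shows "ereal ((1 - t) * u + t * v) \<le> f ((1 - t) * x + t * y)"
proof -
  have "(1 - t) *\<^sub>R (x, u) + t *\<^sub>R (y, v) \<in> {(x, r). ereal r \<le> f x}"
    using assms by (intro convexD_alt) (auto simp: concave_efun_def)
  then show ?thesis
    by simp
qed

lemma convex_edom:
  assumes "concave_efun f" "\<And>x. f x < \<infinity>"
  shows "convex (edom f)"
  unfolding convex_alt
proof (intro ballI allI impI)
  fix x y t :: real
  assume x: "x \<in> edom f" and y: "y \<in> edom f" and t: "0 \<le> t \<and> t \<le> 1"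
  have "ereal ((1 - t) * real_of_ereal (f x) + t * real_of_ereal (f y)) \<le> f ((1 - t) * x + t * y)"
    using x y t by (intro concave_efunD[OF assms(1)]) (auto simp: edom_def ereal_real)
  then show "(1 - t) *\<^sub>R x + t *\<^sub>R y \<in> edom f"
    using assms(2) unfolding edom_def by (auto intro: less_le_trans)
qed

lemma concave_on_edom:
  assumes "concave_efun f" "\<And>x. f x < \<infinity>"
  shows "concave_on (edom f) (\<lambda>x. real_of_ereal (f x))"
proof (rule concave_on_linorderI)
  fix t x y :: real
  assume t: "0 < t" "t < 1" and xy: "x \<in> edom f" "y \<in> edom f"
  then have "(1 - t) * x + t * y \<in> edom f"
    using convexD_alt[OF convex_edom[OF assms], of x y t] by simp
  moreover have "ereal ((1 - t) * real_of_ereal (f x) + t * real_of_ereal (f y))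
      \<le> f ((1 - t) * x + t * y)"
    using t xy by (intro concave_efunD[OF assms(1)]) (auto simp: edom_def ereal_real)
  ultimately show "(1 - t) * real_of_ereal (f x) + t * real_of_ereal (f y)
      \<le> real_of_ereal (f ((1 - t) *\<^sub>R x + t *\<^sub>R y))"
    by (auto simp: edom_def ereal_le_real_iff)
qed (rule convex_edom[OF assms])

lemma continuous_on_interior_edom:
  assumes "concave_efun f" "\<And>x. f x < \<infinity>"
  shows "continuous_on (interior (edom f)) (\<lambda>x. real_of_ereal (f x))"
proof -
  have "convex_on (interior (edom f)) (\<lambda>x. - real_of_ereal (f x))"
    using concave_on_edom[OF assms] convex_edom[OF assms]
    by (intro convex_on_subset[OF _ interior_subset convex_interior]) (simp_all add: concave_on_def)
  then have "continuous_on (interior (edom f)) (\<lambda>x. - (- real_of_ereal (f x)))"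
    by (intro continuous_on_minus convex_on_continuous) simp_all
  then show ?thesis
    by simp
qed

lemma closedin_level_set_interior_edom:
  assumes "concave_efun f" "\<And>x. f x < \<infinity>"
  shows "closedin (top_of_set (interior (edom f))) {x \<in> interior (edom f). f x = c}"
proof (cases "c = \<infinity> \<or> c = -\<infinity>")
  case True
  then have "{x \<in> interior (edom f). f x = c} = {}"
    using interior_subset[of "edom f"] by (auto simp: edom_def)
  then show ?thesis
    by (metis closedin_empty)
next
  case False
  then obtain r where r: "c = ereal r"
    by (cases c) auto
  have "f x = ereal (real_of_ereal (f x))" if "x \<in> interior (edom f)" for x
    using interior_subset that by (cases "f x") (auto simp: edom_def)
  then have "{x \<in> interior (edom f). f x = c} = {x \<in> interior (edom f). real_of_ereal (f x) = r}"
    using r by (metis (no_types, lifting) ereal.inject)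
  then show ?thesis
    using continuous_closedin_preimage_constant[OF continuous_on_interior_edom[OF assms]] by simp
qed

lemma eargmax_eq_level_set: "eargmax f = {x. f x = (SUP y. f y)}"
  unfolding eargmax_def using SUP_upper[of _ UNIV f] by (auto intro: order.antisym SUP_least)

lemma closedin_zero_or_argmax:
  assumes "concave_efun f" "\<And>x. f x < \<infinity>"
  shows "closedin (top_of_set (interior (edom f)))
    (interior (edom f) \<inter> ({d. f d = 0} \<union> eargmax f))"
proof -
  have "interior (edom f) \<inter> ({d. f d = 0} \<union> eargmax f)
      = {x \<in> interior (edom f). f x = 0} \<union> {x \<in> interior (edom f). f x = (SUP y. f y)}"
    unfolding eargmax_eq_level_set by blast
  then show ?thesis
    using closedin_level_set_interior_edom[OF assms] by (simp add: closedin_Un)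
qed

lemma Sup_zero_or_argmax_mem:
  fixes f :: "real \<Rightarrow> ereal"
  defines "S \<equiv> {d. f d = 0} \<union> eargmax f"
  assumes conc: "concave_efun f" and fin: "\<And>x. f x < \<infinity>"
    and "S \<noteq> {}" and bound: "\<And>s. s \<in> S \<Longrightarrow> s \<le> b" and "b < a" and "a \<in> edom f"
  shows "Sup S \<in> S"
proof (rule ccontr)
  assume "Sup S \<notin> S"
  have bdd: "bdd_above S"
    using bound by (rule bdd_aboveI)
  obtain s0 where "s0 \<in> S"
    using \<open>S \<noteq> {}\<close> by blast
  then have "s0 < Sup S"
    using cSup_upper[OF _ bdd] \<open>Sup S \<notin> S\<close> by (metis order_less_le)
  have "f a \<le> f s0" if "f s0 \<noteq> 0"
    using \<open>s0 \<in> S\<close> that unfolding S_def eargmax_def by blast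
  then have "s0 \<in> edom f"
    using \<open>a \<in> edom f\<close> fin unfolding edom_def by (cases "f s0 = 0") auto
  then have "{s0..a} \<subseteq> edom f"
    using \<open>a \<in> edom f\<close> by (intro connected_contains_Icc convex_connected convex_edom conc fin)
  moreover have "Sup S < a"
    using cSup_least[OF \<open>S \<noteq> {}\<close> bound] \<open>b < a\<close> by linarith
  ultimately have interior: "Sup S \<in> interior (edom f)"
    using \<open>s0 < Sup S\<close> interior_mono[of "{s0..a}" "edom f"] by auto
  then have "Sup S \<in> closure (interior (edom f) \<inter> S)"
    using open_Int_closure_subset[OF open_interior] closure_contains_Sup[OF \<open>S \<noteq> {}\<close> bdd]
    by blast
  moreover obtain C where "closed C" and C: "interior (edom f) \<inter> S = interior (edom f) \<inter> C"
    using closedin_zero_or_argmax[OF conc fin] unfolding S_def closedin_closed by blast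
  ultimately have "Sup S \<in> C"
    using closure_minimal[of "interior (edom f) \<inter> S" C] by blast
  then show False
    using interior C \<open>Sup S \<notin> S\<close> by blast
qed

locale newton_dinkelbach_step =
  fixes f :: "real \<Rightarrow> ereal" and a b F B G H :: real
  assumes fa: "f a = ereal F" and F_neg: "F < 0"
    and G_super: "G \<in> superdiff f a" and G_neg: "G < 0"
    and newton: "b = a - F / G"
    and fb: "f b = ereal B" and H_super: "H \<in> superdiff f b"
    and H_neg: "B < 0 \<Longrightarrow> H < 0"
begin

lemma a_minus_b: "a - b = F / G"
  using newton by simp

lemma F_eq: "F = G * (a - b)"
  using a_minus_b G_neg by simp

lemma b_less_a: "b < a"
proof -
  have "0 < F / G"
    using F_neg G_neg by (rule divide_neg_neg)
  then show ?thesis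
    using a_minus_b by linarith
qed

lemma tangent_at_a: "f x \<le> ereal (G * (x - b))"
proof -
  have "f x \<le> f a + ereal (G * (x - a))"
    using G_super by (rule superdiffD)
  also have "\<dots> = ereal (G * (x - b))"
    using fa F_eq by (simp add: algebra_simps)
  finally show ?thesis .
qed

lemma B_nonpos: "B \<le> 0"
  using tangent_at_a[of b] fb by simp

lemma tangent_at_b: "f x \<le> ereal (B + H * (x - b))"
  using superdiffD[OF H_super, of x] fb by simp

lemma F_less_B: "F < B"
proof (cases "B = 0")
  case True
  then show ?thesis
    using F_neg by simp
next
  case False
  then have "H * (a - b) < 0"
    using H_neg B_nonpos b_less_a by (simp add: mult_neg_pos)
  moreover have "F \<le> B + H * (a - b)"
    using tangent_at_b[of a] fa by simp
  ultimately show ?thesis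
    by linarith
qed

lemma G_le_superdiff_b:
  assumes "h \<in> superdiff f b"
  shows "G \<le> h"
proof -
  have "F \<le> B + h * (a - b)"
    using superdiffD[OF assms, of a] fa fb by simp
  then have "G * (a - b) \<le> h * (a - b)"
    using F_eq B_nonpos by linarith
  then show ?thesis
    using b_less_a by simp
qed

lemma G_le_H: "G \<le> H"
  using H_super by (rule G_le_superdiff_b)

lemma ratio_le_one: "B / F + H / G \<le> 1"
proof -
  have "B / F + H / G = (B + H * (a - b)) / F"
    using F_neg G_neg by (simp add: a_minus_b field_simps)
  also have "\<dots> \<le> F / F"
    using tangent_at_b[of a] fa F_neg by (intro divide_right_mono_neg) simp_all
  finally show ?thesis
    using F_neg by simp
qed

lemma H_eq_G_iff:
  "H = G \<longleftrightarrow> H = Inf (superdiff f b) \<and> G = Sup (superdiff f a) \<and> f b = 0"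
proof -
  have Inf_eq: "Inf (superdiff f b) = G" if "B = 0"
  proof (rule cInf_eq_minimum)
    show "G \<in> superdiff f b"
      using tangent_at_a fb that unfolding superdiff_def by simp
  qed (rule G_le_superdiff_b)
  have Sup_eq: "Sup (superdiff f a) = G" if "B = 0"
  proof (rule cSup_eq_maximum[OF G_super])
    fix h
    assume "h \<in> superdiff f a"
    then have "B \<le> F + h * (b - a)"
      using superdiffD[of h f a b] fa fb by simp
    then have "h * (a - b) \<le> G * (a - b)"
      using F_eq that by (simp add: algebra_simps)
    then show "h \<le> G"
      using b_less_a by simp
  qed
  have "B = 0" if "H = G"
    using tangent_at_b[of a] fa F_eq B_nonpos that by simp
  then show ?thesis
    using Inf_eq Sup_eq fb by (auto simp: zero_ereal_def)
qed

lemma less_fb_right: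
  assumes "b < x"
  shows "f x < f b"
proof (cases "B = 0")
  case True
  have "G * (x - b) < 0"
    using G_neg assms by (simp add: mult_neg_pos)
  then show ?thesis
    using tangent_at_a[of x] fb True by (simp add: le_less_trans)
next
  case False
  then have "H * (x - b) < 0"
    using H_neg B_nonpos assms by (simp add: mult_neg_pos)
  then show ?thesis
    using tangent_at_b[of x] fb by (simp add: le_less_trans)
qed

lemma fb_le_zero_or_argmax:
  assumes "s \<in> {d. f d = 0} \<union> eargmax f"
  shows "f b \<le> f s"
proof -
  have "f b \<le> 0"
    using fb B_nonpos by simp
  then show ?thesis
    using assms unfolding eargmax_def by auto
qed

lemma zero_or_argmax_le_b:
  assumes "s \<in> {d. f d = 0} \<union> eargmax f"
  shows "s \<le> b"
  using fb_le_zero_or_argmax[OF assms] less_fb_right[of s] by (meson not_le)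

end

lemma nd_reached_le: "nd_reached f dl g i \<Longrightarrow> k \<le> i \<Longrightarrow> nd_reached f dl g k"
  unfolding nd_reached_def by auto

lemma nd_reached_SucD:
  assumes "nd_reached f dl g (Suc k)" "1 \<le> k"
  shows "f (dl k) \<noteq> 0" and "dl (Suc k) = dl k - real_of_ereal (f (dl k)) / g k"
    and "g (Suc k) \<in> superdiff f (dl (Suc k))" and "f (dl (Suc k)) \<noteq> -\<infinity>"
    and "f (dl (Suc k)) < 0 \<Longrightarrow> g (Suc k) < 0"
  using assms unfolding nd_reached_def by (auto dest!: spec[where x = k])

lemma nd_reached_iterate:
  assumes "nd_reached f dl g k" "1 \<le> k"
  shows "dl k \<in> edom f \<and> f (dl k) \<le> 0 \<and> g k \<in> superdiff f (dl k) \<and> (f (dl k) < 0 \<longrightarrow> g k < 0)"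
  using assms
proof (induction k)
  case 0
  then show ?case
    by simp
next
  case (Suc k)
  show ?case
  proof (cases "k = 0")
    case True
    then show ?thesis
      using Suc.prems(1) by (simp add: nd_reached_def)
  next
    case False
    then have "1 \<le> k"
      by simp
    then have IH: "dl k \<in> edom f" "f (dl k) \<le> 0" "f (dl k) < 0 \<longrightarrow> g k < 0"
      "g k \<in> superdiff f (dl k)"
      using Suc nd_reached_le[of f dl g "Suc k" k] by simp_all
    note step = nd_reached_SucD[OF Suc.prems(1) \<open>1 \<le> k\<close>]
    obtain F where F: "f (dl k) = ereal F"
      using IH(1) by (cases "f (dl k)") (auto simp: edom_def)
    have "g k \<noteq> 0"
      using IH(2,3) step(1) by (simp add: order_less_le)
    then have "f (dl (Suc k)) \<le> 0"
      using superdiff_newton_nonpos[OF IH(4) F] step(2) F by simp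
    then show ?thesis
      using step(3-5) by (auto simp: edom_def)
  qed
qed

theorem lemma3p1:
  fixes f :: "real \<Rightarrow> ereal" and dl g :: "nat \<Rightarrow> real" and i :: nat
  assumes "proper_concave f"
    and "\<exists>d\<in>edom f. f d \<le> 0 \<and> (\<exists>s\<in>superdiff f d. s < 0)"
    and "(\<exists>d. f d = 0) \<or> (\<exists>d. \<forall>y. f y \<le> f d)"
    and "nd_reached f dl g i"
    and "i \<ge> 2"
  shows "nd_delta_star f \<le> dl i \<and> dl i < dl (i - 1)
    \<and> f (nd_delta_star f) \<ge> f (dl i) \<and> f (dl i) > f (dl (i - 1))
    \<and> g i \<ge> g (i - 1)
    \<and> (g i = g (i - 1) \<longleftrightarrow>
         g i = Inf (superdiff f (dl i)) \<and> g (i - 1) = Sup (superdiff f (dl (i - 1)))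
         \<and> f (dl i) = 0)
    \<and> real_of_ereal (f (dl i)) / real_of_ereal (f (dl (i - 1))) + g i / g (i - 1) \<le> 1"
proof -
  have conc: "concave_efun f" and fin: "\<And>x. f x < \<infinity>"
    using assms(1) unfolding proper_concave_def by auto
  obtain j where i: "i = Suc j" and "1 \<le> j"
    using assms(5) by (cases i) auto
  have prev: "dl j \<in> edom f" "f (dl j) \<le> 0" "f (dl j) < 0 \<longrightarrow> g j < 0"
      "g j \<in> superdiff f (dl j)"
    using nd_reached_iterate[OF nd_reached_le[OF assms(4)] \<open>1 \<le> j\<close>] i by auto
  have cur: "dl i \<in> edom f" "f (dl i) < 0 \<longrightarrow> g i < 0" "g i \<in> superdiff f (dl i)"
    using nd_reached_iterate[OF assms(4)] i by auto
  note step = nd_reached_SucD[OF assms(4)[unfolded i] \<open>1 \<le> j\<close>]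
  obtain F B where F: "f (dl j) = ereal F" and B: "f (dl i) = ereal B"
    using prev(1) cur(1) by (cases "f (dl j)"; cases "f (dl i)") (auto simp: edom_def)
  interpret newton_dinkelbach_step f "dl j" "dl i" F B "g j" "g i"
    using F B prev step(1,2) cur i by unfold_locales (auto simp: order_less_le)
  define S where "S = {d. f d = 0} \<union> eargmax f"
  have "S \<noteq> {}"
    using assms(3) unfolding S_def eargmax_def by auto
  then have "Sup S \<in> S"
    unfolding S_def
    using Sup_zero_or_argmax_mem[OF conc fin _ zero_or_argmax_le_b b_less_a prev(1)] by blast
  then have "nd_delta_star f = Sup S"
    unfolding nd_delta_star_def S_def[symmetric]
    using cSup_upper[OF _ bdd_aboveI[OF zero_or_argmax_le_b[unfolded S_def[symmetric]]]]
    by (intro Greatest_equality) auto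
  with \<open>Sup S \<in> S\<close> show ?thesis
    using zero_or_argmax_le_b fb_le_zero_or_argmax b_less_a F_less_B G_le_H H_eq_G_iff
      ratio_le_one F B i unfolding S_def by auto
qed

end
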